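(* Let $(X,\|\cdot\|_X)$ be a strictly convex two-dimensional real normed space such that the set of points of $S_X$ where $\|\cdot\|_X$ is not differentiable is finite. Let $C_X\subset X$ be a piecewise $C^1$ Jordan curve enclosing a convex set, and let $a\in C_X$ be a point at which $C_X$ is differentiable. Define $\operatorname{NDif}(a)=\{b\in C_X: t\mapsto\|\gamma_a(t)-b\|_X \text{ is not differentiable at } t=0\}$. Then $\operatorname{NDif}(a)$ is the union of a finite set and at most one segment, and if such a segment is present, one of its endpoints is $a$.
   Context: Fix the anticlockwise orientation of $X\cong\mathbb{R}^2$. For a point $a$ on a convex, piecewise $C^1$ Jordan curve $C\subset X$ of $\|\cdot\|_X$-length $L$, $\gamma_a:\mathbb{R}\to C$ denotes the unique anticlockwise, $L$-periodic map with $\gamma_a(0)=a$, injective on $[0,L)$, having one-sided derivatives at every $t$, all of $\|\cdot\|_X$-norm $1$. $C$ is differentiable at $\gamma_a(t)$ iff the one-sided derivatives of $\gamma_a$ at $t$ coincide. A norm is strictly convex if its unit sphere contains no nontrivial segment. *)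

theory Defs
  imports "HOL-Complex_Analysis.Complex_Analysis"
begin

text \<open>The two-dimensional real space X is identified with the complex plane (as a real
vector space, with its standard anticlockwise orientation); the norm of X is an
arbitrary norm N on it.\<close>

definition is_norm :: "(complex \<Rightarrow> real) \<Rightarrow> bool" where
  "is_norm N \<longleftrightarrow> (\<forall>x. N x = 0 \<longleftrightarrow> x = 0) \<and> (\<forall>x y. N (x + y) \<le> N x + N y)
     \<and> (\<forall>c x. N (c *\<^sub>R x) = \<bar>c\<bar> * N x)"

definition strictly_convex_norm :: "(complex \<Rightarrow> real) \<Rightarrow> bool" where
  "strictly_convex_norm N \<longleftrightarrow>
     (\<forall>x y. x \<noteq> y \<longrightarrow> \<not> closed_segment x y \<subseteq> {z. N z = 1})"

definition piecewise_C1_jordan_curve :: "complex set \<Rightarrow> bool" where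
  "piecewise_C1_jordan_curve C \<longleftrightarrow>
     (\<exists>g. simple_path g \<and> pathfinish g = pathstart g \<and>
          g piecewise_C1_differentiable_on {0..1} \<and> path_image g = C)"

text \<open>The arclength parametrisation gamma_a of C (w.r.t. N) starting at a:
anticlockwise, L-periodic, injective on [0,L), image C, one-sided derivatives
everywhere, all of N-norm 1. Anticlockwise means the closed loop traced on [0,L]
winds +1 around the points enclosed by C.\<close>
definition arclength_param ::
    "(complex \<Rightarrow> real) \<Rightarrow> complex set \<Rightarrow> real \<Rightarrow> complex \<Rightarrow> (real \<Rightarrow> complex) \<Rightarrow> bool" where
  "arclength_param N C L a \<gamma> \<longleftrightarrow>
     L > 0 \<and> \<gamma> 0 = a \<and> (\<forall>t. \<gamma> (t + L) = \<gamma> t) \<and> inj_on \<gamma> {0..<L} \<and> \<gamma> ` {0..<L} = C \<and>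
     (\<forall>t. \<exists>v w. (\<gamma> has_vector_derivative v) (at_right t) \<and>
                 (\<gamma> has_vector_derivative w) (at_left t) \<and> N v = 1 \<and> N w = 1) \<and>
     (\<forall>z\<in>inside C. winding_number (\<lambda>s. \<gamma> (L * s)) z = 1)"

text \<open>C is differentiable at gamma(t) iff the one-sided derivatives of gamma at t coincide.\<close>
definition curve_differentiable_at_param :: "(real \<Rightarrow> complex) \<Rightarrow> real \<Rightarrow> bool" where
  "curve_differentiable_at_param \<gamma> t \<longleftrightarrow>
     (\<exists>v. (\<gamma> has_vector_derivative v) (at_right t) \<and> (\<gamma> has_vector_derivative v) (at_left t))"

definition NDif :: "(complex \<Rightarrow> real) \<Rightarrow> complex set \<Rightarrow> (real \<Rightarrow> complex) \<Rightarrow> complex set" where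
  "NDif N C \<gamma> = {b \<in> C. \<not> (\<lambda>t. N (\<gamma> t - b)) differentiable (at 0)}"

end

(* Let v be the tangent vector of the curve at a and b a point of C other than a. Comparing
   gamma with its tangent line shows that t \<mapsto> N (gamma t - b) is differentiable at 0 as soon as
   t \<mapsto> N (b - a - t v) is, which happens when N is differentiable at b - a, and also when b - a
   is parallel to v, since N is then affine near 0 along that line. So every b \<noteq> a in NDif lies
   on a ray from a whose direction is one of the finitely many non-smooth points of the unit
   sphere and is not parallel to v. Such a ray meets C at most once: two points of C on it would,
   by convexity of the region bounded by C, put a whole segment from a into C, and the tangent at
   a would be parallel to that segment. Hence NDif is finite. *)

theory Submission
  imports Defs
begin

lemma has_vector_derivative_at_from_left_right:
  fixes g :: "real \<Rightarrow> 'a::real_normed_vector"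
  assumes "(g has_vector_derivative v) (at_left t)" "(g has_vector_derivative v) (at_right t)"
  shows "(g has_vector_derivative v) (at t)"
proof -
  have "netlimit (at_left t) = t" "netlimit (at_right t) = t"
    by (auto intro!: Lim_ident_at)
  then have "((\<lambda>y. (g y - g t - (y - t) *\<^sub>R v) /\<^sub>R \<bar>y - t\<bar>) \<longlongrightarrow> 0) (sup (at_left t) (at_right t))"
    using assms unfolding has_vector_derivative_def has_derivative_def
    by (auto intro!: filterlim_sup)
  then show ?thesis
    using assms unfolding has_vector_derivative_def has_derivative_def
    by (simp add: at_eq_sup_left_right[of t, symmetric])
qed

lemma has_vector_derivative_imp_difference_quotient:
  fixes g :: "real \<Rightarrow> 'a::real_normed_vector"
  assumes "(g has_vector_derivative v) (at t)"
  shows "((\<lambda>h. (g (t + h) - g t) /\<^sub>R h) \<longlongrightarrow> v) (at 0)"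
proof -
  have "((\<lambda>h. norm (g (t + h) - g t - h *\<^sub>R v) / norm h) \<longlongrightarrow> 0) (at 0)"
    using assms unfolding has_vector_derivative_def has_derivative_at by simp
  moreover have "\<forall>\<^sub>F h in at 0. norm (g (t + h) - g t - h *\<^sub>R v) / norm h
      = norm ((g (t + h) - g t) /\<^sub>R h - v)"
  proof (rule eventually_at_filter[THEN iffD2, OF always_eventually], intro allI impI)
    fix h :: real assume "h \<noteq> 0"
    then have "g (t + h) - g t - h *\<^sub>R v = h *\<^sub>R ((g (t + h) - g t) /\<^sub>R h - v)"
      by (simp add: algebra_simps)
    then show "norm (g (t + h) - g t - h *\<^sub>R v) / norm h = norm ((g (t + h) - g t) /\<^sub>R h - v)"
      using \<open>h \<noteq> 0\<close> by simp
  qed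
  ultimately have "((\<lambda>h. norm ((g (t + h) - g t) /\<^sub>R h - v)) \<longlongrightarrow> 0) (at 0)"
    by (rule tendsto_cong[THEN iffD1, rotated])
  then show ?thesis by (simp add: tendsto_norm_zero_iff LIM_zero_cancel)
qed

lemma continuous_on_if_one_sided_derivatives:
  fixes \<gamma> :: "real \<Rightarrow> 'a::real_normed_vector"
  assumes "\<And>t. \<exists>v w. (\<gamma> has_vector_derivative v) (at_right t) \<and> (\<gamma> has_vector_derivative w) (at_left t)"
  shows "continuous_on UNIV \<gamma>"
proof (intro continuous_at_imp_continuous_on ballI)
  fix t
  obtain v w where "(\<gamma> has_vector_derivative v) (at_right t)" "(\<gamma> has_vector_derivative w) (at_left t)"
    using assms by blast
  then have "continuous (at_right t) \<gamma>" "continuous (at_left t) \<gamma>"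
    by (auto intro: has_vector_derivative_continuous)
  then show "isCont \<gamma> t" using continuous_at_split by blast
qed

lemma is_norm_scaleR:
  assumes "is_norm N"
  shows "N (c *\<^sub>R x) = \<bar>c\<bar> * N x"
  using assms unfolding is_norm_def by blast

lemma is_norm_minus:
  assumes "is_norm N"
  shows "N (- x) = N x"
  using is_norm_scaleR[OF assms, of "-1"] by simp

lemma is_norm_nonneg:
  assumes "is_norm N"
  shows "N x \<ge> 0"
proof -
  have "0 = N (x + -x)" using assms unfolding is_norm_def by simp
  also have "\<dots> \<le> N x + N (-x)" using assms unfolding is_norm_def by blast
  finally show ?thesis by (simp add: is_norm_minus[OF assms])
qed

lemma is_norm_pos:
  assumes "is_norm N" "x \<noteq> 0"
  shows "N x > 0"
  using assms is_norm_nonneg[OF assms(1), of x] unfolding is_norm_def by fastforce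

lemma is_norm_lipschitz:
  assumes "is_norm N"
  obtains K where "\<And>x y. \<bar>N x - N y\<bar> \<le> K * cmod (x - y)"
proof
  have triangle: "N (x + y) \<le> N x + N y" for x y
    using assms unfolding is_norm_def by blast
  have bound: "N z \<le> (N 1 + N \<i>) * cmod z" for z
  proof -
    have "z = Re z *\<^sub>R 1 + Im z *\<^sub>R \<i>" by (simp add: complex_eq_iff)
    then have "N z \<le> N (Re z *\<^sub>R 1) + N (Im z *\<^sub>R \<i>)" using triangle by metis
    also have "\<dots> = \<bar>Re z\<bar> * N 1 + \<bar>Im z\<bar> * N \<i>"
      by (simp add: is_norm_scaleR[OF assms])
    also have "\<dots> \<le> cmod z * N 1 + cmod z * N \<i>"
      using is_norm_nonneg[OF assms] abs_Re_le_cmod abs_Im_le_cmod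
      by (intro add_mono mult_right_mono) auto
    finally show ?thesis by (simp add: algebra_simps)
  qed
  fix x y
  have "N x \<le> N y + N (x - y)" "N y \<le> N x + N (-(x - y))"
    using triangle[of y "x - y"] triangle[of x "y - x"] by simp_all
  moreover have "N (-(x - y)) = N (x - y)" by (rule is_norm_minus[OF assms])
  ultimately show "\<bar>N x - N y\<bar> \<le> (N 1 + N \<i>) * cmod (x - y)"
    using bound[of "x - y"] by linarith
qed

lemma differentiable_comp_curve_if_along_tangent:
  fixes f :: "'a::real_normed_vector \<Rightarrow> real" and \<gamma> :: "real \<Rightarrow> 'a"
  assumes lipschitz: "\<And>x y. \<bar>f x - f y\<bar> \<le> K * norm (x - y)"
    and \<gamma>: "(\<gamma> has_vector_derivative v) (at 0)"
    and tangent: "(\<lambda>t. f (\<gamma> 0 + t *\<^sub>R v)) differentiable (at 0)"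
  shows "(\<lambda>t. f (\<gamma> t)) differentiable (at 0)"
proof -
  define e where "e t = f (\<gamma> t) - f (\<gamma> 0 + t *\<^sub>R v)" for t
  have "(e has_derivative (\<lambda>_. 0)) (at 0)"
    unfolding has_derivative_at
  proof (intro conjI)
    have "((\<lambda>t. norm (\<gamma> (0 + t) - \<gamma> 0 - t *\<^sub>R v) / norm t) \<longlongrightarrow> 0) (at 0)"
      using \<gamma> unfolding has_vector_derivative_def has_derivative_at by simp
    then have "((\<lambda>t. K * (norm (\<gamma> t - \<gamma> 0 - t *\<^sub>R v) / norm t)) \<longlongrightarrow> 0) (at 0)"
      using tendsto_mult_right_zero by fastforce
    moreover have "norm (norm (e (0 + t) - e 0 - 0) / norm t) \<le> K * (norm (\<gamma> t - \<gamma> 0 - t *\<^sub>R v) / norm t)" for t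
      using lipschitz[of "\<gamma> t" "\<gamma> 0 + t *\<^sub>R v"]
      by (simp add: e_def divide_right_mono diff_diff_eq2 algebra_simps)
    ultimately show "((\<lambda>t. norm (e (0 + t) - e 0 - 0) / norm t) \<longlongrightarrow> 0) (at 0)"
      by (metis (no_types, lifting) Lim_null_comparison always_eventually)
  qed simp
  then have "(\<lambda>t. f (\<gamma> 0 + t *\<^sub>R v) + e t) differentiable (at 0)"
    using tangent differentiableI differentiable_add by blast
  then show ?thesis unfolding e_def by simp
qed

lemma is_norm_differentiable_scaleR:
  assumes "is_norm N" "c > 0" "N differentiable (at u)"
  shows "N differentiable (at (c *\<^sub>R u))"
proof -
  have rescale: "(\<lambda>y. c * N ((1 / c) *\<^sub>R y)) = N"
  proof
    fix y
    show "c * N ((1 / c) *\<^sub>R y) = N y"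
      using assms(2) by (simp add: is_norm_scaleR[OF assms(1)])
  qed
  have "N differentiable (at ((\<lambda>y. (1 / c) *\<^sub>R y) (c *\<^sub>R u)))"
    using assms(2,3) by simp
  then have "(N \<circ> (\<lambda>y. (1 / c) *\<^sub>R y)) differentiable (at (c *\<^sub>R u))"
    by (intro differentiable_chain_at) simp
  then have "(\<lambda>y. c * N ((1 / c) *\<^sub>R y)) differentiable (at (c *\<^sub>R u))"
    by (intro differentiable_mult differentiable_const) (simp add: o_def)
  then show ?thesis by (simp only: rescale)
qed

lemma is_norm_differentiable_radial:
  assumes "is_norm N"
  shows "(\<lambda>t. N (x + t *\<^sub>R (l *\<^sub>R x))) differentiable (at 0)"
proof -
  have "(\<lambda>t::real. (1 + t * l) * N x) differentiable (at 0)" by simp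
  then show ?thesis
  proof (rule differentiable_transform_within[where d = "1 / (\<bar>l\<bar> + 1)"])
    fix t :: real assume "dist t 0 < 1 / (\<bar>l\<bar> + 1)"
    then have "\<bar>t\<bar> * (\<bar>l\<bar> + 1) < 1"
      by (simp add: less_divide_eq add_pos_nonneg)
    then have "\<bar>t * l\<bar> < 1" by (simp add: abs_mult algebra_simps)
    moreover have "x + t *\<^sub>R (l *\<^sub>R x) = (1 + t * l) *\<^sub>R x" by (simp add: algebra_simps)
    ultimately show "(1 + t * l) * N x = N (x + t *\<^sub>R (l *\<^sub>R x))"
      by (simp add: is_norm_scaleR[OF assms])
  qed auto
qed

lemma frontier_convex_ray:
  fixes I :: "'a::euclidean_space set"
  assumes "convex I" "a \<in> frontier I" "a + c1 *\<^sub>R u \<in> frontier I" "a + c2 *\<^sub>R u \<in> frontier I"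
    and "0 < c1" "c1 < c2" "0 \<le> s" "s \<le> c1"
  shows "a + s *\<^sub>R u \<in> frontier I"
proof (cases "s = c1 \<or> u = 0")
  case True
  then show ?thesis using assms by auto
next
  case False
  then have "s < c1" "u \<noteq> 0" using assms by auto
  have "a + s *\<^sub>R u = (1 - s / c1) *\<^sub>R a + (s / c1) *\<^sub>R (a + c1 *\<^sub>R u)"
    using assms(5) by (simp add: algebra_simps)
  then have "a + s *\<^sub>R u \<in> closed_segment a (a + c1 *\<^sub>R u)"
    unfolding in_segment using assms(5,7,8) by (auto intro!: exI[of _ "s / c1"])
  moreover have "closed_segment a (a + c1 *\<^sub>R u) \<subseteq> closure I"
    using assms(1-3) by (intro closed_segment_subset convex_closure) (auto simp: frontier_def)
  ultimately have closure: "a + s *\<^sub>R u \<in> closure I" by blast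
  have "a + s *\<^sub>R u \<notin> interior I"
  proof
    assume interior: "a + s *\<^sub>R u \<in> interior I"
    define \<theta> where "\<theta> = (c1 - s) / (c2 - s)"
    have "0 < \<theta>" "\<theta> < 1" using assms \<open>s < c1\<close> by (auto simp: \<theta>_def)
    moreover have "\<theta> * (c2 - s) = c1 - s"
      using assms \<open>s < c1\<close> by (simp add: \<theta>_def)
    then have "(1 - \<theta>) * s + \<theta> * c2 = c1"
      by (simp add: algebra_simps)
    then have "a + c1 *\<^sub>R u = (1 - \<theta>) *\<^sub>R (a + s *\<^sub>R u) + \<theta> *\<^sub>R (a + c2 *\<^sub>R u)"
      by (simp add: algebra_simps flip: scaleR_add_left)
    ultimately have "a + c1 *\<^sub>R u \<in> open_segment (a + s *\<^sub>R u) (a + c2 *\<^sub>R u)"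
      unfolding in_segment using assms \<open>u \<noteq> 0\<close> by auto
    also have "\<dots> \<subseteq> interior I"
      using assms(1,4) interior by (intro in_interior_closure_convex_segment) (auto simp: frontier_def)
    finally show False using assms(3) by (simp add: frontier_def)
  qed
  with closure show ?thesis by (simp add: frontier_def)
qed

lemma periodic_curve_near_start:
  fixes \<gamma> :: "real \<Rightarrow> 'a::heine_borel"
  assumes "continuous_on UNIV \<gamma>" "\<And>t. \<gamma> (t + L) = \<gamma> t" "inj_on \<gamma> {0..<L}" "\<delta> > 0"
  obtains \<epsilon> where "\<epsilon> > 0"
    "\<And>t. t \<in> {0..<L} \<Longrightarrow> dist (\<gamma> t) (\<gamma> 0) < \<epsilon> \<Longrightarrow> \<exists>s. \<bar>s\<bar> < \<delta> \<and> \<gamma> s = \<gamma> t"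
proof -
  define K where "K = \<gamma> ` {\<delta>..L - \<delta>}"
  have closed: "closed K" unfolding K_def
    by (intro compact_imp_closed compact_continuous_image continuous_on_subset[OF assms(1)]) auto
  have outside: "\<gamma> 0 \<notin> K"
  proof
    assume "\<gamma> 0 \<in> K"
    then obtain t where "t \<in> {\<delta>..L - \<delta>}" "\<gamma> t = \<gamma> 0" unfolding K_def by auto
    then show False using inj_onD[OF assms(3), of t 0] assms(4) by auto
  qed
  obtain \<epsilon> where "\<epsilon> > 0" and far: "\<And>x. x \<in> K \<Longrightarrow> \<epsilon> \<le> dist (\<gamma> 0) x"
    using separate_point_closed[OF closed outside] by blast
  show ?thesis
  proof (rule that[OF \<open>\<epsilon> > 0\<close>])
    fix t assume t: "t \<in> {0..<L}" "dist (\<gamma> t) (\<gamma> 0) < \<epsilon>"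
    have "t \<notin> {\<delta>..L - \<delta>}"
    proof
      assume "t \<in> {\<delta>..L - \<delta>}"
      then have "\<epsilon> \<le> dist (\<gamma> 0) (\<gamma> t)" using far by (simp add: K_def)
      with t(2) show False by (simp add: dist_commute)
    qed
    then consider "0 \<le> t" "t < \<delta>" | "L - \<delta> < t" "t < L"
      using t(1) by (simp add: not_le) linarith
    then show "\<exists>s. \<bar>s\<bar> < \<delta> \<and> \<gamma> s = \<gamma> t"
    proof cases
      case 1
      then show ?thesis by (intro exI[of _ t]) simp
    next
      case 2
      then show ?thesis using assms(2)[of "t - L"] by (intro exI[of _ "t - L"]) simp
    qed
  qed
qed

lemma tangent_in_span_of_curve_segment:
  fixes \<gamma> :: "real \<Rightarrow> 'a::euclidean_space"
  assumes cont: "continuous_on UNIV \<gamma>" and per: "\<And>t. \<gamma> (t + L) = \<gamma> t"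
    and inj: "inj_on \<gamma> {0..<L}" and img: "\<gamma> ` {0..<L} = C"
    and der: "(\<gamma> has_vector_derivative v) (at 0)"
    and "u \<noteq> 0" "c > 0" and segment: "\<And>s. 0 < s \<Longrightarrow> s < c \<Longrightarrow> \<gamma> 0 + s *\<^sub>R u \<in> C"
  shows "v \<in> span {u}"
proof -
  \<comment> \<open>Parameters h \<noteq> 0 arbitrarily close to 0 map into the segment, so along them the
     difference quotients lie in the closed set span {u}.\<close>
  define H where "H = {h. \<gamma> h - \<gamma> 0 \<in> span {u}}"
  have "0 islimpt H"
    unfolding islimpt_approachable_real
  proof (intro allI impI)
    fix \<delta> :: real assume "\<delta> > 0"
    obtain \<epsilon> where "\<epsilon> > 0"
      and near: "\<And>t. t \<in> {0..<L} \<Longrightarrow> dist (\<gamma> t) (\<gamma> 0) < \<epsilon> \<Longrightarrow> \<exists>h. \<bar>h\<bar> < \<delta> \<and> \<gamma> h = \<gamma> t"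
      using periodic_curve_near_start[OF cont per inj \<open>\<delta> > 0\<close>] by blast
    define s where "s = min (c / 2) (\<epsilon> / (2 * norm u))"
    have s: "0 < s" "s < c" "s * norm u < \<epsilon>"
      using \<open>c > 0\<close> \<open>\<epsilon> > 0\<close> \<open>u \<noteq> 0\<close> by (auto simp: s_def min_def field_simps)
    then obtain t where "t \<in> {0..<L}" "\<gamma> t = \<gamma> 0 + s *\<^sub>R u"
      using segment img by (metis imageE)
    moreover have "dist (\<gamma> 0 + s *\<^sub>R u) (\<gamma> 0) < \<epsilon>"
      using s by (simp add: dist_norm)
    ultimately obtain h where h: "\<bar>h\<bar> < \<delta>" "\<gamma> h = \<gamma> 0 + s *\<^sub>R u"
      using near by metis
    have "h \<in> H" using h by (simp add: H_def span_mul span_base)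
    moreover have "h \<noteq> 0" using h s \<open>u \<noteq> 0\<close> by auto
    ultimately show "\<exists>h\<in>H. h \<noteq> 0 \<and> \<bar>h - 0\<bar> < \<delta>" using h by auto
  qed
  then have nontrivial: "at 0 within H \<noteq> bot" by (simp add: trivial_limit_within)
  have limit: "((\<lambda>h. (\<gamma> h - \<gamma> 0) /\<^sub>R h) \<longlongrightarrow> v) (at 0 within H)"
    using has_vector_derivative_imp_difference_quotient[OF der]
    by (auto intro: tendsto_mono[OF at_le])
  have "\<forall>\<^sub>F h in at 0 within H. (\<gamma> h - \<gamma> 0) /\<^sub>R h \<in> span {u}"
    by (auto simp: eventually_at_filter H_def span_mul)
  from Lim_in_closed_set[OF closed_span this nontrivial limit] show ?thesis .
qed

lemma convex_curve_ray_unique: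
  fixes \<gamma> :: "real \<Rightarrow> 'a::euclidean_space"
  assumes "convex I" "C = frontier I"
    and cont: "continuous_on UNIV \<gamma>" and per: "\<And>t. \<gamma> (t + L) = \<gamma> t"
    and inj: "inj_on \<gamma> {0..<L}" and img: "\<gamma> ` {0..<L} = C" and "L > 0"
    and der: "(\<gamma> has_vector_derivative v) (at 0)" and "u \<noteq> 0" "v \<notin> span {u}"
    and "\<gamma> 0 + c1 *\<^sub>R u \<in> C" "\<gamma> 0 + c2 *\<^sub>R u \<in> C" "c1 > 0" "c2 > 0"
  shows "c1 = c2"
proof -
  have "\<gamma> 0 \<in> C" using img \<open>L > 0\<close> by force
  have ordered: False if "c < c'" "\<gamma> 0 + c *\<^sub>R u \<in> C" "\<gamma> 0 + c' *\<^sub>R u \<in> C" "c > 0" for c c'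
  proof -
    have "\<gamma> 0 + s *\<^sub>R u \<in> C" if "0 < s" "s < c" for s
      using frontier_convex_ray[of I "\<gamma> 0" c u c' s] assms(1,2) \<open>\<gamma> 0 \<in> C\<close>
        \<open>c < c'\<close> \<open>c > 0\<close> \<open>\<gamma> 0 + c *\<^sub>R u \<in> C\<close> \<open>\<gamma> 0 + c' *\<^sub>R u \<in> C\<close> that
      by auto
    then have "v \<in> span {u}"
      using tangent_in_span_of_curve_segment[OF cont per inj img der \<open>u \<noteq> 0\<close> \<open>c > 0\<close>] by blast
    with \<open>v \<notin> span {u}\<close> show False ..
  qed
  show ?thesis
  proof (rule ccontr)
    assume "c1 \<noteq> c2"
    then consider "c1 < c2" | "c2 < c1" by linarith
    then show False
    proof cases
      case 1
      from ordered[OF 1 assms(11,12,13)] show False .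
    next
      case 2
      from ordered[OF 2 assms(12,11,14)] show False .
    qed
  qed
qed

lemma NDif_nonsmooth_direction:
  assumes N: "is_norm N" and der: "(\<gamma> has_vector_derivative v) (at 0)"
    and b: "b \<in> NDif N C \<gamma>"
  shows "\<not> N differentiable (at (b - \<gamma> 0))" "v \<notin> span {b - \<gamma> 0}"
proof -
  define x where "x = b - \<gamma> 0"
  obtain K where lipschitz: "\<And>x y. \<bar>N x - N y\<bar> \<le> K * cmod (x - y)"
    using is_norm_lipschitz[OF N] by blast
  have along: "(\<lambda>t. N (\<gamma> 0 + t *\<^sub>R v - b)) = (\<lambda>t. N (x + t *\<^sub>R (- v)))"
  proof
    fix t
    show "N (\<gamma> 0 + t *\<^sub>R v - b) = N (x + t *\<^sub>R (- v))"
      using is_norm_minus[OF N, of "x + t *\<^sub>R (- v)"] by (simp add: x_def algebra_simps)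
  qed
  have lipschitz_shifted: "\<bar>N (y - b) - N (z - b)\<bar> \<le> K * cmod (y - z)" for y z
    using lipschitz[of "y - b" "z - b"] by simp
  have tangent: "\<not> (\<lambda>t. N (x + t *\<^sub>R (- v))) differentiable (at 0)"
  proof
    assume "(\<lambda>t. N (x + t *\<^sub>R (- v))) differentiable (at 0)"
    then have "(\<lambda>t. N (\<gamma> 0 + t *\<^sub>R v - b)) differentiable (at 0)"
      by (simp only: along)
    then have "(\<lambda>t. N (\<gamma> t - b)) differentiable (at 0)"
      by (rule differentiable_comp_curve_if_along_tangent[OF lipschitz_shifted der])
    with b show False unfolding NDif_def by blast
  qed
  show "\<not> N differentiable (at (b - \<gamma> 0))"
  proof
    assume "N differentiable (at (b - \<gamma> 0))"
    then have "(N \<circ> (\<lambda>t. x + t *\<^sub>R (- v))) differentiable (at 0)"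
      by (intro differentiable_chain_at) (auto simp: x_def)
    with tangent show False by (simp add: o_def)
  qed
  show "v \<notin> span {b - \<gamma> 0}"
  proof
    assume "v \<in> span {b - \<gamma> 0}"
    then obtain l where "- v = l *\<^sub>R x"
      unfolding real_vector.span_singleton x_def by (metis rangeE scaleR_minus_left)
    with tangent is_norm_differentiable_radial[OF N, of x l] show False by simp
  qed
qed

lemma NDif_normalized_direction:
  assumes N: "is_norm N" and der: "(\<gamma> has_vector_derivative v) (at 0)"
    and b: "b \<in> NDif N C \<gamma>" "b \<noteq> \<gamma> 0"
  defines "u \<equiv> (1 / N (b - \<gamma> 0)) *\<^sub>R (b - \<gamma> 0)"
  shows "N u = 1" "\<not> N differentiable (at u)" "v \<notin> span {u}"
    and "b = \<gamma> 0 + N (b - \<gamma> 0) *\<^sub>R u" "N (b - \<gamma> 0) > 0"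
proof -
  show pos: "N (b - \<gamma> 0) > 0" using is_norm_pos[OF N] b(2) by simp
  then show scale: "b = \<gamma> 0 + N (b - \<gamma> 0) *\<^sub>R u" by (simp add: u_def)
  show "N u = 1" using pos by (simp add: u_def is_norm_scaleR[OF N])
  show "\<not> N differentiable (at u)"
    using NDif_nonsmooth_direction(1)[OF N der b(1)] is_norm_differentiable_scaleR[OF N pos] scale
    by (metis add_diff_cancel_left')
  have "span {u} \<subseteq> span {b - \<gamma> 0}"
    unfolding u_def by (intro span_minimal) (auto simp: span_mul span_base)
  then show "v \<notin> span {u}" using NDif_nonsmooth_direction(2)[OF N der b(1)] by auto
qed

lemma finite_NDif:
  fixes N :: "complex \<Rightarrow> real"
  assumes N: "is_norm N" and nonsmooth: "finite {x. N x = 1 \<and> \<not> N differentiable (at x)}"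
    and "convex I" "C = frontier I"
    and cont: "continuous_on UNIV \<gamma>" and per: "\<And>t. \<gamma> (t + L) = \<gamma> t"
    and inj: "inj_on \<gamma> {0..<L}" and img: "\<gamma> ` {0..<L} = C" and "L > 0"
    and der: "(\<gamma> has_vector_derivative v) (at 0)"
  shows "finite (NDif N C \<gamma>)"
proof -
  define dir where "dir b = (1 / N (b - \<gamma> 0)) *\<^sub>R (b - \<gamma> 0)" for b
  note dir = NDif_normalized_direction[OF N der, folded dir_def]
  have "N 0 = 0" using N unfolding is_norm_def by blast
  have "inj_on dir (NDif N C \<gamma> - {\<gamma> 0})"
  proof (rule inj_onI)
    fix b1 b2 assume "b1 \<in> NDif N C \<gamma> - {\<gamma> 0}" "b2 \<in> NDif N C \<gamma> - {\<gamma> 0}"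
      and same: "dir b1 = dir b2"
    then have b1: "b1 \<in> NDif N C \<gamma>" "b1 \<noteq> \<gamma> 0" and b2: "b2 \<in> NDif N C \<gamma>" "b2 \<noteq> \<gamma> 0"
      by auto
    have "dir b1 \<noteq> 0" using dir(1)[OF b1] \<open>N 0 = 0\<close> by auto
    moreover have "\<gamma> 0 + N (b1 - \<gamma> 0) *\<^sub>R dir b1 \<in> C" "\<gamma> 0 + N (b2 - \<gamma> 0) *\<^sub>R dir b1 \<in> C"
      using dir(4)[OF b1] dir(4)[OF b2] b1(1) b2(1) same unfolding NDif_def by auto
    ultimately have "N (b1 - \<gamma> 0) = N (b2 - \<gamma> 0)"
      using convex_curve_ray_unique[OF assms(3,4) cont per inj img \<open>L > 0\<close> der]
        dir(3,5)[OF b1] dir(5)[OF b2] by blast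
    then show "b1 = b2" using dir(4)[OF b1] dir(4)[OF b2] same by metis
  qed
  moreover have "dir ` (NDif N C \<gamma> - {\<gamma> 0}) \<subseteq> {x. N x = 1 \<and> \<not> N differentiable (at x)}"
    using dir(1,2) by blast
  ultimately have "finite (NDif N C \<gamma> - {\<gamma> 0})"
    using inj_on_finite nonsmooth by blast
  then show ?thesis by simp
qed

theorem mainTheorem9:
  fixes N :: "complex \<Rightarrow> real" and C :: "complex set" and a :: complex
    and L :: real and \<gamma> :: "real \<Rightarrow> complex"
  assumes "is_norm N"
    and "strictly_convex_norm N"
    and "finite {x. N x = 1 \<and> \<not> N differentiable (at x)}"
    and "piecewise_C1_jordan_curve C"
    and "convex (inside C)"
    and "a \<in> C"
    and "arclength_param N C L a \<gamma>"
    and "curve_differentiable_at_param \<gamma> 0"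
  shows "\<exists>F. finite F \<and> (NDif N C \<gamma> = F \<or> (\<exists>c. NDif N C \<gamma> = F \<union> closed_segment a c))"
proof -
  obtain g where "simple_path g" "pathfinish g = pathstart g" "path_image g = C"
    using assms(4) unfolding piecewise_C1_jordan_curve_def by auto
  then have frontier: "C = frontier (inside C)"
    using Jordan_inside_outside by blast
  have "L > 0" and per: "\<And>t. \<gamma> (t + L) = \<gamma> t"
    and inj: "inj_on \<gamma> {0..<L}" and img: "\<gamma> ` {0..<L} = C"
    using assms(7) unfolding arclength_param_def by auto
  have cont: "continuous_on UNIV \<gamma>"
    using assms(7) unfolding arclength_param_def
    by (intro continuous_on_if_one_sided_derivatives) blast
  obtain v where der: "(\<gamma> has_vector_derivative v) (at 0)"
    using assms(8) has_vector_derivative_at_from_left_right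
    unfolding curve_differentiable_at_param_def by blast
  from finite_NDif[OF assms(1,3,5) frontier cont per inj img \<open>L > 0\<close> der]
  show ?thesis by blast
qed

end
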